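(* For each positive integer $k$ and each $n\in\mathbb{Z}$, $$f(n-k, x, q^k s) = \frac{1}{v(k)} \big(f(k-1, x, qs) f(n, x, s) - f(k, x, s) f(n-1, x, qs)\big),\qquad v(k) = (-1)^k q^{\binom{k}{2}} s^{k-1}.$$
   Context: Let $x,s,q$ be indeterminates; all quantities live in the field of rational functions in $x,s,q$. The Carlitz $q$-Fibonacci polynomials $f(n,x,s)$ are defined by $f(0,x,s)=0$, $f(1,x,s)=1$ and $f(n, x, s) = x f(n-1, x, s) + q^{n-2} s f(n-2, x, s)$; this recurrence is required to hold for all $n\in\mathbb{Z}$, which uniquely extends $f(n,x,s)$ to negative $n$. Here $f(n,x,q^a s)$ means $f(n,x,s)$ with $s$ replaced by $q^a s$. *)

theory Defs
  imports Complex_Main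
begin

definition carlitz_fib :: "'a::field \<Rightarrow> int \<Rightarrow> 'a \<Rightarrow> 'a \<Rightarrow> 'a" where
  "carlitz_fib q n x s =
     (THE g :: int \<Rightarrow> 'a. g 0 = 0 \<and> g 1 = 1 \<and>
        (\<forall>m. g m = x * g (m - 1) + q powi (m - 2) * s * g (m - 2))) n"

definition carlitz_v :: "'a::field \<Rightarrow> 'a \<Rightarrow> nat \<Rightarrow> 'a" where
  "carlitz_v q s k = (-1) ^ k * q ^ (k choose 2) * s ^ (k - 1)"

end

(* Both sides are, as functions of n, solutions of the three-term recurrence
   g n = x g(n-1) + q^(n-2) s g(n-2), and since its coefficients are nonzero a solution is
   determined by two consecutive values, in either direction. The left side is 0 and 1 at
   n = k and n = k + 1; so is the right side, trivially at n = k, and at n = k + 1 because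
   the Casoratian W k of f(n, x, s) and f(n - 1, x, q s) satisfies W (k + 1) = - q^k s W k,
   W 1 = -1, hence W k = v k. *)
theory Submission
  imports Defs
begin

definition solves_rec :: "(int \<Rightarrow> 'a::field) \<Rightarrow> 'a \<Rightarrow> (int \<Rightarrow> 'a) \<Rightarrow> bool" where
  "solves_rec c x g \<longleftrightarrow> (\<forall>m. g m = x * g (m - 1) + c m * g (m - 2))"

lemma solves_recD: "solves_rec c x g \<Longrightarrow> g m = x * g (m - 1) + c m * g (m - 2)"
  unfolding solves_rec_def by blast

lemma solves_rec_lincomb:
  assumes "solves_rec c x g" and "solves_rec c x h"
  shows "solves_rec c x (\<lambda>n. a * g n + b * h n)"
  unfolding solves_rec_def
proof
  fix m
  show "a * g m + b * h m =
      x * (a * g (m - 1) + b * h (m - 1)) + c m * (a * g (m - 2) + b * h (m - 2))"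
    using assms[THEN solves_recD, of m] by (simp add: algebra_simps)
qed

lemma solves_rec_zero:
  assumes rec: "solves_rec c x g" and c: "\<And>m. c m \<noteq> 0"
    and "g a = 0" and "g (a + 1) = 0"
  shows "g n = 0"
proof -
  let ?P = "\<lambda>m. g m = 0 \<and> g (m + 1) = 0"
  have "?P a" using assms by simp
  have up: "?P (m + 1)" if "?P m" for m
  proof -
    have "g (m + 2) = x * g (m + 1) + c (m + 2) * g m"
      using rec[THEN solves_recD, of "m + 2"] by (simp add: ac_simps)
    moreover have "m + 1 + 1 = m + 2" by simp
    ultimately show ?thesis using that by (simp add: ac_simps)
  qed
  have down: "?P (m - 1)" if "?P m" for m
  proof -
    have "g (m + 1) = x * g m + c (m + 1) * g (m - 1)"
      using rec[THEN solves_recD, of "m + 1"] by simp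
    then have "g (m - 1) = 0" using that c[of "m + 1"] by simp
    then show ?thesis using that by simp
  qed
  consider "a \<le> n" | "n \<le> a" by linarith
  then have "?P n"
  proof cases
    case 1 then show ?thesis by (induction n rule: int_ge_induct) (use \<open>?P a\<close> up in auto)
  next
    case 2 then show ?thesis by (induction n rule: int_le_induct) (use \<open>?P a\<close> down in auto)
  qed
  then show ?thesis ..
qed

lemma solves_rec_eq:
  assumes "solves_rec c x g" and "solves_rec c x h" and "\<And>m. c m \<noteq> 0"
    and "g a = h a" and "g (a + 1) = h (a + 1)"
  shows "g n = h n"
proof -
  have "solves_rec c x (\<lambda>n. 1 * g n + (- 1) * h n)"
    using assms by (intro solves_rec_lincomb)
  then have "1 * g n + (- 1) * h n = 0"
    by (rule solves_rec_zero[where a = a, OF _ assms(3)]) (use assms in simp_all)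
  then show ?thesis by simp
qed

lemma solves_rec_casoratian:
  assumes "solves_rec c x g" and "solves_rec c x h"
  shows "g (m + 1) * h (m + 2) - h (m + 1) * g (m + 2) =
    - c (m + 2) * (g m * h (m + 1) - h m * g (m + 1))"
  using assms[THEN solves_recD, of "m + 2"] by (simp add: algebra_simps)

function rec_solution :: "(int \<Rightarrow> 'a::field) \<Rightarrow> 'a \<Rightarrow> int \<Rightarrow> 'a" where
  "rec_solution c x n =
     (if n = 0 then 0 else if n = 1 then 1
      else if n \<ge> 2 then x * rec_solution c x (n - 1) + c n * rec_solution c x (n - 2)
      else (rec_solution c x (n + 2) - x * rec_solution c x (n + 1)) / c (n + 2))"
  by auto
termination
  by (relation "measure (\<lambda>(_, _, n). if n \<ge> 0 then nat n else nat (1 - 2 * n))") auto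

declare rec_solution.simps [simp del]

lemma solves_rec_rec_solution:
  assumes c: "\<And>m. c m \<noteq> 0"
  shows "solves_rec c x (rec_solution c x)"
  unfolding solves_rec_def
proof
  fix m
  show "rec_solution c x m = x * rec_solution c x (m - 1) + c m * rec_solution c x (m - 2)"
  proof (cases "m \<ge> 2")
    case True then show ?thesis by (subst rec_solution.simps) simp
  next
    case False
    then have "rec_solution c x (m - 2) = (rec_solution c x m - x * rec_solution c x (m - 1)) / c m"
      by (subst rec_solution.simps) simp
    then show ?thesis using c[of m] by (simp add: field_simps)
  qed
qed

lemma carlitz_fib_eq_rec_solution:
  fixes q x s :: "'a::field"
  assumes "q \<noteq> 0" and "s \<noteq> 0"
  shows "carlitz_fib q n x s = rec_solution (\<lambda>m. q powi (m - 2) * s) x n"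
proof -
  define c where "c = (\<lambda>m::int. q powi (m - 2) * s)"
  have c: "c m \<noteq> 0" for m using assms by (simp add: c_def)
  have "(THE g. g 0 = 0 \<and> g 1 = 1 \<and> solves_rec c x g) = rec_solution c x"
  proof (rule the_equality)
    show "rec_solution c x 0 = 0 \<and> rec_solution c x 1 = 1 \<and> solves_rec c x (rec_solution c x)"
      using solves_rec_rec_solution[OF c] by (simp add: rec_solution.simps)
    show "g = rec_solution c x" if "g 0 = 0 \<and> g 1 = 1 \<and> solves_rec c x g" for g
    proof
      show "g n = rec_solution c x n" for n
        by (rule solves_rec_eq[where a = 0, OF _ solves_rec_rec_solution[OF c] c])
           (use that in \<open>simp_all add: rec_solution.simps\<close>)
    qed
  qed
  then show ?thesis unfolding carlitz_fib_def solves_rec_def c_def by (simp add: mult.assoc)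
qed

lemma
  fixes q x s :: "'a::field"
  assumes "q \<noteq> 0" and "s \<noteq> 0"
  shows carlitz_fib_0: "carlitz_fib q 0 x s = 0"
    and carlitz_fib_1: "carlitz_fib q 1 x s = 1"
  using assms by (simp_all add: carlitz_fib_eq_rec_solution rec_solution.simps)

lemma solves_rec_carlitz_fib_shift:
  fixes q x s :: "'a::field"
  assumes q: "q \<noteq> 0" and s: "s \<noteq> 0"
  shows "solves_rec (\<lambda>m. q powi (m - 2) * s) x (\<lambda>n. carlitz_fib q (n - int j) x (q ^ j * s))"
proof -
  have "solves_rec (\<lambda>m. q powi (m - 2) * (q ^ j * s)) x (\<lambda>n. carlitz_fib q n x (q ^ j * s))"
    using q s solves_rec_rec_solution[of "\<lambda>m. q powi (m - 2) * (q ^ j * s)"]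
    by (simp add: carlitz_fib_eq_rec_solution)
  then show ?thesis
    unfolding solves_rec_def
  proof (intro allI)
    fix m
    assume "\<forall>m. carlitz_fib q m x (q ^ j * s) =
      x * carlitz_fib q (m - 1) x (q ^ j * s) + q powi (m - 2) * (q ^ j * s) * carlitz_fib q (m - 2) x (q ^ j * s)"
    then have rec: "carlitz_fib q (m - int j) x (q ^ j * s) =
      x * carlitz_fib q (m - int j - 1) x (q ^ j * s)
      + q powi (m - int j - 2) * (q ^ j * s) * carlitz_fib q (m - int j - 2) x (q ^ j * s)" ..
    have index: "m - int j - 1 = m - 1 - int j" "m - int j - 2 = m - 2 - int j" by simp_all
    have coeff: "q powi (m - 2 - int j) * (q ^ j * s) = q powi (m - 2) * s"
      using q by (simp add: power_int_diff)
    show "carlitz_fib q (m - int j) x (q ^ j * s) =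
      x * carlitz_fib q (m - 1 - int j) x (q ^ j * s)
      + q powi (m - 2) * s * carlitz_fib q (m - 2 - int j) x (q ^ j * s)"
      using rec unfolding index coeff .
  qed
qed

lemma carlitz_v_nonzero:
  fixes q s :: "'a::field"
  assumes "q \<noteq> 0" and "s \<noteq> 0"
  shows "carlitz_v q s k \<noteq> 0"
  using assms by (simp add: carlitz_v_def)

lemma carlitz_v_Suc:
  fixes q s :: "'a::field"
  assumes "k \<ge> 1"
  shows "carlitz_v q s (Suc k) = - (q ^ k * s) * carlitz_v q s k"
proof -
  have "Suc k choose 2 = k + (k choose 2)" by (simp add: numeral_2_eq_2)
  moreover have "s ^ (Suc k - 1) = s * s ^ (k - 1)"
    using assms by (cases k) simp_all
  ultimately show ?thesis by (simp add: carlitz_v_def power_add)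
qed

lemma carlitz_fib_cassini:
  fixes q x s :: "'a::field"
  assumes q: "q \<noteq> 0" and s: "s \<noteq> 0" and "k \<ge> 1"
  shows "carlitz_fib q (int k - 1) x (q * s) * carlitz_fib q (int k + 1) x s
       - carlitz_fib q (int k) x s * carlitz_fib q (int k) x (q * s) = carlitz_v q s k"
  using \<open>k \<ge> 1\<close>
proof (induction k rule: nat_induct_at_least)
  case base
  have "q * s \<noteq> 0" using q s by simp
  then show ?case
    using q s by (simp add: carlitz_fib_0 carlitz_fib_1 carlitz_v_def numeral_2_eq_2)
next
  case (Suc k)
  let ?c = "\<lambda>m. q powi (m - 2) * s"
  let ?A = "\<lambda>n. carlitz_fib q n x s" and ?D = "\<lambda>n. carlitz_fib q (n - 1) x (q * s)"
  have "solves_rec ?c x ?D"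
    using solves_rec_carlitz_fib_shift[OF q s, of x 1] by simp
  moreover have "solves_rec ?c x ?A"
    using solves_rec_carlitz_fib_shift[OF q s, of x 0] by simp
  ultimately have "?D (int k + 1) * ?A (int k + 2) - ?A (int k + 1) * ?D (int k + 2)
      = - ?c (int k + 2) * (?D (int k) * ?A (int k + 1) - ?A (int k) * ?D (int k + 1))"
    by (rule solves_rec_casoratian)
  also have "\<dots> = - (q ^ k * s) * carlitz_v q s k"
    using Suc.IH by simp
  also have "\<dots> = carlitz_v q s (Suc k)"
    by (rule carlitz_v_Suc[OF Suc.hyps, symmetric])
  finally show ?case by (simp add: ac_simps)
qed

theorem corollary2:
  fixes q x s :: "'a::field" and k :: nat and n :: int
  assumes "q \<noteq> 0" and "s \<noteq> 0" and "k \<ge> 1"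
  shows "carlitz_fib q (n - int k) x (q ^ k * s) =
    (1 / carlitz_v q s k) *
      (carlitz_fib q (int k - 1) x (q * s) * carlitz_fib q n x s
       - carlitz_fib q (int k) x s * carlitz_fib q (n - 1) x (q * s))"
proof -
  let ?c = "\<lambda>m. q powi (m - 2) * s"
  let ?A = "\<lambda>n. carlitz_fib q n x s" and ?D = "\<lambda>n. carlitz_fib q (n - 1) x (q * s)"
  let ?R = "\<lambda>n. (?D (int k) / carlitz_v q s k) * ?A n + (- ?A (int k) / carlitz_v q s k) * ?D n"
  have "solves_rec ?c x (\<lambda>n. carlitz_fib q (n - int k) x (q ^ k * s))"
    using solves_rec_carlitz_fib_shift[OF assms(1,2)] .
  moreover have "solves_rec ?c x ?R"
    using solves_rec_carlitz_fib_shift[OF assms(1,2), of x 0]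
      solves_rec_carlitz_fib_shift[OF assms(1,2), of x 1]
    by (intro solves_rec_lincomb) simp_all
  moreover have "?c m \<noteq> 0" for m using assms by simp
  ultimately have "carlitz_fib q (n - int k) x (q ^ k * s) = ?R n"
  proof (rule solves_rec_eq[where a = "int k"])
    have "q ^ k * s \<noteq> 0" using assms by simp
    then show "carlitz_fib q (int k - int k) x (q ^ k * s) = ?R (int k)"
      and "carlitz_fib q (int k + 1 - int k) x (q ^ k * s) = ?R (int k + 1)"
      using assms carlitz_fib_cassini[OF assms] carlitz_v_nonzero[OF assms(1,2)]
      by (simp_all add: carlitz_fib_0 carlitz_fib_1 field_simps)
  qed
  then show ?thesis
    using carlitz_v_nonzero[OF assms(1,2), of k] by (simp add: field_simps)
qed

end
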